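(* Let $n\ge1$ and $\beta_1,\dots,\beta_n\in\widehat{\mathbb{F}_q^\times}$ with $\beta_1\cdots\beta_n\neq\varepsilon$. Then for every $\nu\in\widehat{\mathbb{F}_q^\times}$, $$\frac{(\beta_1\cdots\beta_n)_\nu}{(\varepsilon)^\circ_\nu}=\frac{1}{(1-q)^{n-1}}\sum_{\substack{\nu_1,\dots,\nu_n\in\widehat{\mathbb{F}_q^\times}\\ \nu_1\cdots\nu_n=\nu}}\prod_{i=1}^n\frac{(\beta_i)_{\nu_i}}{(\varepsilon)^\circ_{\nu_i}}.$$
   Context: $\mathbb{F}_q$ is a finite field with $q$ elements. $\widehat{\mathbb{F}_q^\times}$ is the group of multiplicative characters $\mathbb{F}_q^\times\to\overline{\mathbb{Q}}^\times$, $\varepsilon$ the trivial character; $\delta(\eta)=1$ if $\eta=\varepsilon$, else $0$. $\psi$ is a fixed non-trivial additive character of $\mathbb{F}_q$. $g(\eta)=-\sum_{x\in\mathbb{F}_q^\times}\psi(x)\eta(x)$, $g^\circ(\eta)=q^{\delta(\eta)}g(\eta)$, $(\alpha)_\nu=g(\alpha\nu)/g(\alpha)$, $(\alpha)^\circ_\nu=g^\circ(\alpha\nu)/g^\circ(\alpha)$. *)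

theory Defs
  imports "HOL-Library.FuncSet" Complex_Main
begin

text \<open>Multiplicative characters of a finite field, extended by the convention chi 0 = 0,
  so that characters are determined by their values and pointwise products are again characters.\<close>
definition mult_char :: "('a::field \<Rightarrow> complex) \<Rightarrow> bool" where
  "mult_char \<chi> \<longleftrightarrow> \<chi> 0 = 0 \<and> \<chi> 1 = 1 \<and> (\<forall>x y. \<chi> (x * y) = \<chi> x * \<chi> y)"

definition add_char :: "('a::field \<Rightarrow> complex) \<Rightarrow> bool" where
  "add_char \<psi> \<longleftrightarrow> \<psi> 0 = 1 \<and> (\<forall>x y. \<psi> (x + y) = \<psi> x * \<psi> y)"

definition triv_char :: "'a::field \<Rightarrow> complex" where
  "triv_char = (\<lambda>x. if x = 0 then 0 else 1)"

definition char_mult :: "('a \<Rightarrow> complex) \<Rightarrow> ('a \<Rightarrow> complex) \<Rightarrow> 'a \<Rightarrow> complex" where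
  "char_mult \<alpha> \<nu> = (\<lambda>x. \<alpha> x * \<nu> x)"

definition delta_char :: "('a::field \<Rightarrow> complex) \<Rightarrow> nat" where
  "delta_char \<eta> = (if \<eta> = triv_char then 1 else 0)"

definition gauss :: "('a::{finite,field} \<Rightarrow> complex) \<Rightarrow> ('a \<Rightarrow> complex) \<Rightarrow> complex" where
  "gauss \<psi> \<eta> = - (\<Sum>x\<in>UNIV - {0}. \<psi> x * \<eta> x)"

definition gauss0 :: "('a::{finite,field} \<Rightarrow> complex) \<Rightarrow> ('a \<Rightarrow> complex) \<Rightarrow> complex" where
  "gauss0 \<psi> \<eta> = of_nat (card (UNIV :: 'a set)) ^ delta_char \<eta> * gauss \<psi> \<eta>"

definition poch :: "('a::{finite,field} \<Rightarrow> complex) \<Rightarrow> ('a \<Rightarrow> complex) \<Rightarrow> ('a \<Rightarrow> complex) \<Rightarrow> complex" where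
  "poch \<psi> \<alpha> \<nu> = gauss \<psi> (char_mult \<alpha> \<nu>) / gauss \<psi> \<alpha>"

definition poch0 :: "('a::{finite,field} \<Rightarrow> complex) \<Rightarrow> ('a \<Rightarrow> complex) \<Rightarrow> ('a \<Rightarrow> complex) \<Rightarrow> complex" where
  "poch0 \<psi> \<alpha> \<nu> = gauss0 \<psi> (char_mult \<alpha> \<nu>) / gauss0 \<psi> \<alpha>"

end

theory Submission
  imports Defs "HOL-Algebra.Algebraic_Closure_Type" "HOL-Library.Cardinality"
begin

(* The ratio (beta)_nu / (epsilon)0_nu is a multiplicative Fourier (Mellin) coefficient of an
   explicit kernel: expanding both Gauss sums and using g0(nu) g(nu^-1) = nu(-1) q gives
     (beta)_nu / (epsilon)0_nu = sum_{t <> 0} k_beta(t) nu(t),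
     k_beta(t) = (q - 1) delta(beta) [t = 1] - beta(t / (t - 1)).
   For beta = beta_1 ... beta_n <> epsilon the kernel factors as k_beta = (-1)^(n-1) prod_i k_beta_i,
   and by the orthogonality relations for characters the Mellin transform of a pointwise product
   is (q - 1)^(n-1) times the convolution of the transforms over nu_1 ... nu_n = nu. *)

section \<open>Multiplicative characters of a finite field\<close>

lemma power_eq_power_iff_mod:
  fixes z :: "'b::idom"
  assumes "z \<noteq> 0" and order: "\<And>k. z ^ k = 1 \<longleftrightarrow> d dvd k"
  shows "z ^ i = z ^ j \<longleftrightarrow> i mod d = j mod d"
proof -
  have *: "z ^ i = z ^ j \<longleftrightarrow> i mod d = j mod d" if "i \<le> j" for i j
  proof -
    have "z ^ j = z ^ i * z ^ (j - i)"
      using that by (simp flip: power_add)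
    then have "z ^ i = z ^ j \<longleftrightarrow> z ^ (j - i) = 1"
      using \<open>z \<noteq> 0\<close> by auto
    then show ?thesis
      using order[of "j - i"] mod_eq_dvd_iff_nat[OF that, of d] by auto
  qed
  show ?thesis
    using *[of i j] *[of j i] by (cases "i \<le> j") auto
qed

lemma finite_field_cyclic:
  obtains a :: "'a::{finite,field}" and d :: nat
  where "d > 0" and "\<And>x. x \<noteq> 0 \<Longrightarrow> \<exists>i. x = a ^ i"
    and "\<And>i j. a ^ i = a ^ j \<longleftrightarrow> i mod d = j mod d"
proof -
  let ?R = "ring_of_type_algebra :: 'a ring"
  let ?G = "Multiplicative_Group.mult_of ?R"
  interpret F: field ?R by (rule field_from_type_algebra)
  interpret G: group ?G by (rule F.field_mult_group)
  have carrier: "carrier ?G = UNIV - {0}" and one: "\<one>\<^bsub>?R\<^esub> = 1"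
    by (simp_all add: ring_of_type_algebra_def)
  have power: "x [^]\<^bsub>?R\<^esub> (k::nat) = x ^ k" for x k
    by (induction k) (simp_all add: ring_of_type_algebra_def mult.commute)
  have "finite (carrier ?R)"
    by (simp add: ring_of_type_algebra_def)
  obtain a where a: "a \<in> carrier ?G" and gen: "carrier ?G = {a [^]\<^bsub>?R\<^esub> i | i::nat. i \<in> UNIV}"
    using F.finite_field_mult_group_has_gen[OF \<open>finite (carrier ?R)\<close>] by blast
  show thesis
  proof (rule that)
    show "G.ord a > 0"
      using G.ord_ge_1 a carrier by (metis finite less_eq_Suc_le One_nat_def)
    show "\<exists>i. x = a ^ i" if "x \<noteq> 0" for x
    proof -
      have "x \<in> carrier ?G"
        using that carrier by blast
      then show ?thesis
        unfolding gen power by blast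
    qed
    have "a ^ k = 1 \<longleftrightarrow> G.ord a dvd k" for k
      using G.pow_eq_id[OF a, of k] by (simp add: Multiplicative_Group.nat_pow_mult_of power one)
    then show "a ^ i = a ^ j \<longleftrightarrow> i mod G.ord a = j mod G.ord a" for i j
      using a carrier by (intro power_eq_power_iff_mod) auto
  qed
qed

lemma cis_power_eq_iff_mod:
  fixes d :: nat
  assumes "d > 0"
  shows "cis (2 * pi / d) ^ i = cis (2 * pi / d) ^ j \<longleftrightarrow> i mod d = j mod d"
proof -
  let ?z = "cis (2 * pi / d)"
  have power: "?z ^ k = cis (2 * pi * real k / d)" for k
    by (simp add: DeMoivre mult_ac)
  have "?z ^ d = 1"
    using assms by (simp add: power)
  then have period: "?z ^ k = ?z ^ (k mod d)" for k
    using power_add[of ?z "d * (k div d)" "k mod d"] by (simp add: power_mult)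
  have inj: "inj_on (\<lambda>k. cis (2 * pi * real k / d)) {..<d}"
    using bij_betw_roots_unity[OF assms] by (simp add: bij_betw_def)
  have "?z ^ i = ?z ^ j \<longleftrightarrow> ?z ^ (i mod d) = ?z ^ (j mod d)"
    using period[of i] period[of j] by simp
  also have "\<dots> \<longleftrightarrow> i mod d = j mod d"
    unfolding power by (rule inj_on_eq_iff[OF inj]) (simp_all add: assms)
  finally show ?thesis .
qed

lemma exists_mult_char_neq_1:
  fixes t :: "'a::{finite,field}"
  assumes "t \<noteq> 0" and "t \<noteq> 1"
  shows "\<exists>\<chi>. mult_char \<chi> \<and> \<chi> t \<noteq> 1"
proof -
  obtain d and a :: 'a where "d > 0" and gen: "\<And>x. x \<noteq> 0 \<Longrightarrow> \<exists>i. x = a ^ i"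
    and a_eq: "\<And>i j. a ^ i = a ^ j \<longleftrightarrow> i mod d = j mod d"
    by (rule finite_field_cyclic) auto
  define z where "z = cis (2 * pi / d)"
  have z_eq: "z ^ i = z ^ j \<longleftrightarrow> i mod d = j mod d" for i j
    unfolding z_def using cis_power_eq_iff_mod[OF \<open>d > 0\<close>] .
  define dlog where "dlog x = (SOME i. x = a ^ i)" for x
  have dlog: "a ^ dlog x = x" if "x \<noteq> 0" for x
    unfolding dlog_def using someI_ex[OF gen[OF that]] by (rule sym)
  \<comment> \<open>a and z both have order d, so a ^ i \<mapsto> z ^ i is a well-defined injective character\<close>
  define \<chi> where "\<chi> x = (if x = 0 then 0 else z ^ dlog x)" for x
  have "mult_char \<chi>"
    unfolding mult_char_def
  proof (intro conjI allI)
    show "\<chi> 0 = 0"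
      by (simp add: \<chi>_def)
    have "a ^ dlog 1 = a ^ 0"
      using dlog[of 1] by simp
    then have "z ^ dlog 1 = z ^ 0"
      unfolding a_eq z_eq .
    then show "\<chi> 1 = 1"
      by (simp add: \<chi>_def)
    fix x y :: 'a
    show "\<chi> (x * y) = \<chi> x * \<chi> y"
    proof (cases "x = 0 \<or> y = 0")
      case False
      then have "a ^ dlog (x * y) = a ^ (dlog x + dlog y)"
        by (simp add: dlog power_add)
      then have "z ^ dlog (x * y) = z ^ (dlog x + dlog y)"
        unfolding a_eq z_eq .
      then show ?thesis
        using False by (simp add: \<chi>_def power_add)
    qed (auto simp: \<chi>_def)
  qed
  moreover have "\<chi> t \<noteq> 1"
  proof
    assume "\<chi> t = 1"
    then have "z ^ dlog t = z ^ 0"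
      using assms(1) by (simp add: \<chi>_def)
    then have "a ^ dlog t = a ^ 0"
      unfolding a_eq z_eq .
    then show False
      using dlog[OF assms(1)] assms(2) by simp
  qed
  ultimately show ?thesis by blast
qed

lemma mult_charD:
  assumes "mult_char \<chi>"
  shows "\<chi> 0 = 0" and "\<chi> 1 = 1" and "\<chi> (x * y) = \<chi> x * \<chi> y"
  using assms by (auto simp: mult_char_def)

lemma mult_char_inverse_mult:
  assumes "mult_char \<chi>" and "(x::'a::field) \<noteq> 0"
  shows "\<chi> (inverse x) * \<chi> x = 1"
  using mult_charD(3)[OF assms(1), of "inverse x" x] mult_charD(2)[OF assms(1)] assms(2) by simp

lemma mult_char_power:
  assumes "mult_char \<chi>"
  shows "\<chi> (x ^ n) = \<chi> x ^ n"
  by (induction n) (simp_all add: mult_charD[OF assms])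

lemma mult_char_mult:
  assumes "mult_char \<chi>" and "mult_char \<mu>"
  shows "mult_char (\<lambda>x. \<chi> x * \<mu> x)"
  using assms by (auto simp: mult_char_def mult_ac)

lemma mult_char_inverse:
  assumes "mult_char (\<chi> :: 'a::field \<Rightarrow> complex)"
  shows "mult_char (\<lambda>x. \<chi> (inverse x))"
  using assms by (auto simp: mult_char_def)

lemma mult_char_triv_char: "mult_char (triv_char :: 'a::field \<Rightarrow> complex)"
  by (auto simp: mult_char_def triv_char_def)

lemma mult_char_prod:
  assumes "finite I" and "I \<noteq> {}" and "\<forall>i\<in>I. mult_char (\<beta> i)"
  shows "mult_char (\<lambda>x. \<Prod>i\<in>I. \<beta> i x)"
  using assms
proof (induction I rule: finite_ne_induct)
  case (insert i I)
  then show ?case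
    using mult_char_mult[of "\<beta> i" "\<lambda>x. \<Prod>i\<in>I. \<beta> i x"] by simp
qed simp

lemma mult_char_minus_one_squared:
  assumes "mult_char (\<chi> :: 'a::field \<Rightarrow> complex)"
  shows "\<chi> (-1) * \<chi> (-1) = 1"
  using mult_charD(3)[OF assms, of "-1" "-1"] mult_charD(2)[OF assms] by simp

abbreviation mult_chars :: "('a::field \<Rightarrow> complex) set" where
  "mult_chars \<equiv> {\<chi>. mult_char \<chi>}"

lemma finite_mult_chars: "finite (mult_chars :: ('a::{finite,field} \<Rightarrow> complex) set)"
proof -
  obtain d and a :: 'a where "d > 0" and gen: "\<And>x. x \<noteq> 0 \<Longrightarrow> \<exists>i. x = a ^ i"
    and a_eq: "\<And>i j. a ^ i = a ^ j \<longleftrightarrow> i mod d = j mod d"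
    by (rule finite_field_cyclic) auto
  let ?values = "insert 0 {z :: complex. z ^ d = 1}"
  have "\<chi> x \<in> ?values" if "mult_char \<chi>" for \<chi> :: "'a \<Rightarrow> complex" and x
  proof (cases "x = 0")
    case False
    then obtain i where "x = a ^ i"
      using gen by blast
    moreover have "a ^ (i * d) = a ^ 0"
      unfolding a_eq by simp
    ultimately have "\<chi> x ^ d = \<chi> 1"
      by (simp add: mult_char_power[OF that, symmetric] power_mult[symmetric] mult.commute)
    then show ?thesis
      using mult_charD(2)[OF that] by simp
  qed (simp add: mult_charD(1)[OF that])
  then have "mult_chars \<subseteq> Pi\<^sub>E (UNIV :: 'a set) (\<lambda>_. ?values)"
    by (simp add: PiE_UNIV_domain subset_eq)
  moreover have "finite (Pi\<^sub>E (UNIV :: 'a set) (\<lambda>_. ?values))"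
    using finite_roots_unity[of d] \<open>d > 0\<close> by (intro finite_PiE) auto
  ultimately show ?thesis
    by (rule finite_subset)
qed

lemma card_ge_2: "CARD('a::{finite,field}) \<ge> 2"
proof -
  have "card {0, 1 :: 'a} \<le> CARD('a)"
    by (rule card_mono) auto
  then show ?thesis
    by simp
qed

lemma card_minus_one_nonzero: "(of_nat CARD('a::{finite,field}) - 1 :: complex) \<noteq> 0"
  using card_ge_2[where 'a = 'a] by simp

lemma sum_mult_char:
  assumes "mult_char (\<chi> :: 'a::{finite,field} \<Rightarrow> complex)"
  shows "(\<Sum>x\<in>UNIV - {0}. \<chi> x) = (if \<chi> = triv_char then of_nat CARD('a) - 1 else 0)"
proof (cases "\<chi> = triv_char")
  case True
  then have "(\<Sum>x\<in>UNIV - {0}. \<chi> x) = of_nat (card (UNIV - {0 :: 'a}))"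
    by (simp add: triv_char_def)
  then show ?thesis
    using True by (simp add: card_Diff_subset)
next
  case False
  then obtain b where "\<chi> b \<noteq> triv_char b"
    by auto
  then have "b \<noteq> 0" and "\<chi> b \<noteq> 1"
    using mult_charD(1)[OF assms] by (auto simp: triv_char_def split: if_splits)
  have "(\<Sum>x\<in>UNIV - {0}. \<chi> x) = (\<Sum>x\<in>UNIV - {0}. \<chi> (b * x))"
    by (rule sum.reindex_bij_witness[where j = "\<lambda>x. x / b" and i = "\<lambda>x. b * x"])
       (auto simp: \<open>b \<noteq> 0\<close>)
  also have "\<dots> = \<chi> b * (\<Sum>x\<in>UNIV - {0}. \<chi> x)"
    by (simp add: mult_charD(3)[OF assms] sum_distrib_left)
  finally have "(1 - \<chi> b) * (\<Sum>x\<in>UNIV - {0}. \<chi> x) = 0"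
    by (simp add: algebra_simps)
  then show ?thesis
    using \<open>\<chi> b \<noteq> 1\<close> False by simp
qed

lemma sum_mult_char_times_inverse:
  assumes "mult_char (\<chi> :: 'a::{finite,field} \<Rightarrow> complex)" and "mult_char \<mu>"
  shows "(\<Sum>x\<in>UNIV - {0}. \<chi> x * \<mu> (inverse x)) = (if \<chi> = \<mu> then of_nat CARD('a) - 1 else 0)"
proof -
  have "(\<lambda>x. \<chi> x * \<mu> (inverse x)) = triv_char \<longleftrightarrow> \<chi> = \<mu>"
  proof
    assume triv: "(\<lambda>x. \<chi> x * \<mu> (inverse x)) = triv_char"
    show "\<chi> = \<mu>"
    proof
      fix x
      show "\<chi> x = \<mu> x"
      proof (cases "x = 0")
        case False
        then have "\<chi> x * (\<mu> (inverse x) * \<mu> x) = \<mu> x"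
          using fun_cong[OF triv, of x] by (simp add: triv_char_def mult.assoc[symmetric])
        then show ?thesis
          using mult_char_inverse_mult[OF assms(2) False] by simp
      qed (simp add: mult_charD(1) assms)
    qed
  next
    assume "\<chi> = \<mu>"
    then show "(\<lambda>x. \<chi> x * \<mu> (inverse x)) = triv_char"
      using mult_char_inverse_mult[OF assms(2)] mult_charD(1)[OF assms(2)]
      by (auto simp: triv_char_def fun_eq_iff mult.commute)
  qed
  then show ?thesis
    using sum_mult_char[OF mult_char_mult[OF assms(1) mult_char_inverse[OF assms(2)]]] by simp
qed

lemma sum_mult_chars_eq_card:
  fixes s :: "'a::{finite,field}"
  assumes "s \<noteq> 0"
  shows "(\<Sum>\<chi>\<in>mult_chars. \<chi> s) = (if s = 1 then of_nat (card (mult_chars :: ('a \<Rightarrow> complex) set)) else 0)"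
proof (cases "s = 1")
  case True
  then have "(\<Sum>\<chi>\<in>mult_chars. \<chi> s) = (\<Sum>\<chi>\<in>(mult_chars :: ('a \<Rightarrow> complex) set). 1)"
    by (intro sum.cong) (auto simp: mult_charD(2))
  then show ?thesis
    using True by simp
next
  case False
  obtain \<phi> :: "'a \<Rightarrow> complex" where \<phi>: "mult_char \<phi>" and "\<phi> s \<noteq> 1"
    using exists_mult_char_neq_1[OF assms False] by blast
  have \<phi>_inverse: "\<phi> (inverse x) * \<phi> x = 1" "\<phi> x * \<phi> (inverse x) = 1" if "x \<noteq> 0" for x
    using mult_char_inverse_mult[OF \<phi> that] by (simp_all add: mult.commute)
  have cancel: "\<phi> (inverse x) * (\<phi> x * \<chi> x) = \<chi> x" "\<phi> x * (\<phi> (inverse x) * \<chi> x) = \<chi> x"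
    if "mult_char \<chi>" for \<chi> x
    by (cases "x = 0", simp_all add: mult_charD(1)[OF that] mult.assoc[symmetric] \<phi>_inverse)+
  have "(\<Sum>\<chi>\<in>mult_chars. \<chi> s) = (\<Sum>\<chi>\<in>mult_chars. \<phi> s * \<chi> s)"
  proof (rule sum.reindex_bij_witness[where i = "\<lambda>\<chi> x. \<phi> x * \<chi> x" and j = "\<lambda>\<chi> x. \<phi> (inverse x) * \<chi> x"])
    fix \<chi> :: "'a \<Rightarrow> complex"
    assume "\<chi> \<in> mult_chars"
    then have \<chi>: "mult_char \<chi>"
      by simp
    show "(\<lambda>x. \<phi> (inverse x) * (\<phi> x * \<chi> x)) = \<chi>" "(\<lambda>x. \<phi> x * (\<phi> (inverse x) * \<chi> x)) = \<chi>"
      using cancel[OF \<chi>] by (simp_all only: fun_eq_iff) simp_all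
    show "(\<lambda>x. \<phi> x * \<chi> x) \<in> mult_chars" "(\<lambda>x. \<phi> (inverse x) * \<chi> x) \<in> mult_chars"
      using mult_char_mult[OF \<phi> \<chi>] mult_char_mult[OF mult_char_inverse[OF \<phi>] \<chi>] by simp_all
    show "\<phi> s * (\<phi> (inverse s) * \<chi> s) = \<chi> s"
      using cancel(2)[OF \<chi>] .
  qed
  also have "\<dots> = \<phi> s * (\<Sum>\<chi>\<in>mult_chars. \<chi> s)"
    by (simp add: sum_distrib_left)
  finally have "(1 - \<phi> s) * (\<Sum>\<chi>\<in>mult_chars. \<chi> s) = 0"
    by (simp add: algebra_simps)
  then show ?thesis
    using \<open>\<phi> s \<noteq> 1\<close> False by simp
qed

lemma card_mult_chars: "card (mult_chars :: ('a::{finite,field} \<Rightarrow> complex) set) = CARD('a) - 1"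
proof -
  have "(\<Sum>\<chi>\<in>(mult_chars :: ('a \<Rightarrow> complex) set). \<Sum>x\<in>UNIV - {0}. \<chi> x)
      = (\<Sum>\<chi>\<in>(mult_chars :: ('a \<Rightarrow> complex) set). if \<chi> = triv_char then of_nat CARD('a) - 1 else 0)"
    by (intro sum.cong refl) (simp add: sum_mult_char)
  also have "\<dots> = of_nat CARD('a) - 1"
    by (subst sum.delta[OF finite_mult_chars]) (simp add: mult_char_triv_char)
  finally have "of_nat CARD('a) - 1 = (\<Sum>x\<in>UNIV - {0::'a}. \<Sum>\<chi>\<in>mult_chars. \<chi> x)"
    by (simp add: sum.swap[where B = "UNIV - {0}"])
  also have "\<dots> = (\<Sum>x\<in>UNIV - {0::'a}. if x = 1 then of_nat (card (mult_chars :: ('a \<Rightarrow> complex) set)) else 0)"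
    by (intro sum.cong refl) (simp add: sum_mult_chars_eq_card)
  also have "\<dots> = of_nat (card (mult_chars :: ('a \<Rightarrow> complex) set))"
    by simp
  finally have "of_nat (card (mult_chars :: ('a \<Rightarrow> complex) set)) = (of_nat (CARD('a) - 1) :: complex)"
    using card_ge_2[where 'a = 'a] by simp
  then show ?thesis
    by (simp only: of_nat_eq_iff)
qed

lemma sum_mult_chars:
  fixes s :: "'a::{finite,field}"
  assumes "s \<noteq> 0"
  shows "(\<Sum>\<chi>\<in>mult_chars. \<chi> s) = (if s = 1 then of_nat CARD('a) - 1 else (0 :: complex))"
  using sum_mult_chars_eq_card[OF assms] card_ge_2[where 'a = 'a] by (simp add: card_mult_chars)

section \<open>Additive characters and Gauss sums\<close>

lemma add_charD:
  assumes "add_char \<psi>"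
  shows "\<psi> 0 = 1" and "\<psi> (x + y) = \<psi> x * \<psi> y"
  using assms by (auto simp: add_char_def)

lemma sum_add_char:
  fixes \<psi> :: "'a::{finite,field} \<Rightarrow> complex"
  assumes "add_char \<psi>" and "\<psi> \<noteq> (\<lambda>_. 1)"
  shows "(\<Sum>x\<in>UNIV. \<psi> x) = 0"
proof -
  obtain b where "\<psi> b \<noteq> 1"
    using assms(2) by auto
  have "(\<Sum>x\<in>UNIV. \<psi> x) = (\<Sum>x\<in>UNIV. \<psi> (x + b))"
    by (rule sum.reindex_bij_witness[where j = "\<lambda>x. x - b" and i = "\<lambda>x. x + b"]) auto
  also have "\<dots> = \<psi> b * (\<Sum>x\<in>UNIV. \<psi> x)"
    by (simp add: add_charD(2)[OF assms(1)] sum_distrib_left mult.commute)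
  finally have "(1 - \<psi> b) * (\<Sum>x\<in>UNIV. \<psi> x) = 0"
    by (simp add: algebra_simps)
  then show ?thesis
    using \<open>\<psi> b \<noteq> 1\<close> by simp
qed

lemma sum_add_char_dilated:
  fixes \<psi> :: "'a::{finite,field} \<Rightarrow> complex"
  assumes "add_char \<psi>" and "\<psi> \<noteq> (\<lambda>_. 1)"
  shows "(\<Sum>x\<in>UNIV - {0}. \<psi> (c * x)) = (if c = 0 then of_nat CARD('a) else 0) - 1"
proof (cases "c = 0")
  case True
  then show ?thesis
    by (simp add: add_charD(1)[OF assms(1)] card_Diff_subset)
next
  case False
  have "(\<Sum>x\<in>UNIV - {0}. \<psi> (c * x)) = (\<Sum>x\<in>UNIV - {0}. \<psi> x)"
    by (rule sum.reindex_bij_witness[where i = "\<lambda>x. x / c" and j = "\<lambda>x. c * x"]) (auto simp: False)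
  also have "\<dots> = (\<Sum>x\<in>UNIV. \<psi> x) - \<psi> 0"
    by (simp add: sum_diff1)
  finally show ?thesis
    using False by (simp add: sum_add_char[OF assms] add_charD(1)[OF assms(1)])
qed

lemma gauss_triv_char:
  fixes \<psi> :: "'a::{finite,field} \<Rightarrow> complex"
  assumes "add_char \<psi>" and "\<psi> \<noteq> (\<lambda>_. 1)"
  shows "gauss \<psi> triv_char = 1"
  using sum_add_char_dilated[OF assms, of 1] by (simp add: gauss_def triv_char_def)

lemma gauss0_triv_char:
  fixes \<psi> :: "'a::{finite,field} \<Rightarrow> complex"
  assumes "add_char \<psi>" and "\<psi> \<noteq> (\<lambda>_. 1)"
  shows "gauss0 \<psi> triv_char = of_nat CARD('a)"
  using gauss_triv_char[OF assms] by (simp add: gauss0_def delta_char_def)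

lemma gauss0_mult_gauss_inverse:
  fixes \<psi> :: "'a::{finite,field} \<Rightarrow> complex"
  assumes "add_char \<psi>" and "\<psi> \<noteq> (\<lambda>_. 1)" and \<chi>: "mult_char \<chi>"
  shows "gauss0 \<psi> \<chi> * gauss \<psi> (\<lambda>x. \<chi> (inverse x)) = \<chi> (-1) * of_nat CARD('a)"
proof (cases "\<chi> = triv_char")
  case True
  moreover have "(\<lambda>x. \<chi> (inverse x)) = triv_char" and "triv_char (-1 :: 'a) = 1"
    using True by (simp_all add: triv_char_def)
  ultimately show ?thesis
    by (simp add: gauss0_triv_char[OF assms(1,2)] gauss_triv_char[OF assms(1,2)])
next
  case False
  let ?F = "UNIV - {0::'a}"
  let ?q = "of_nat CARD('a) :: complex"
  have substitution: "(\<Sum>x\<in>?F. \<psi> x * \<chi> x * (\<psi> y * \<chi> (inverse y))) = (\<Sum>t\<in>?F. \<chi> t * \<psi> ((t + 1) * y))"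
    if "y \<in> ?F" for y
  proof (rule sym, rule sum.reindex_bij_witness[where i = "\<lambda>x. x / y" and j = "\<lambda>t. t * y"])
    fix t
    have "\<psi> (t * y) * \<chi> (t * y) * (\<psi> y * \<chi> (inverse y))
        = \<chi> t * (\<chi> (inverse y) * \<chi> y) * (\<psi> (t * y) * \<psi> y)"
      by (simp add: mult_charD(3)[OF \<chi>] mult_ac)
    also have "\<dots> = \<chi> t * \<psi> ((t + 1) * y)"
      using mult_char_inverse_mult[OF \<chi>, of y] that
      by (simp add: distrib_right add_charD(2)[OF assms(1)])
    finally show "\<psi> (t * y) * \<chi> (t * y) * (\<psi> y * \<chi> (inverse y)) = \<chi> t * \<psi> ((t + 1) * y)" .
  qed (use that in auto)
  have "gauss0 \<psi> \<chi> * gauss \<psi> (\<lambda>x. \<chi> (inverse x))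
      = (\<Sum>x\<in>?F. \<psi> x * \<chi> x) * (\<Sum>y\<in>?F. \<psi> y * \<chi> (inverse y))"
    using False by (simp add: gauss0_def gauss_def delta_char_def)
  also have "\<dots> = (\<Sum>y\<in>?F. \<Sum>x\<in>?F. \<psi> x * \<chi> x * (\<psi> y * \<chi> (inverse y)))"
    by (subst sum_product) (rule sum.swap)
  also have "\<dots> = (\<Sum>y\<in>?F. \<Sum>t\<in>?F. \<chi> t * \<psi> ((t + 1) * y))"
    by (intro sum.cong refl substitution)
  also have "\<dots> = (\<Sum>t\<in>?F. \<chi> t * (\<Sum>y\<in>?F. \<psi> ((t + 1) * y)))"
    by (subst sum.swap) (simp add: sum_distrib_left)
  also have "\<dots> = (\<Sum>t\<in>?F. \<chi> t * ((if t + 1 = 0 then ?q else 0) - 1))"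
    by (simp only: sum_add_char_dilated[OF assms(1,2)])
  also have "\<dots> = (\<Sum>t\<in>?F. (if t = -1 then \<chi> t * ?q else 0) - \<chi> t)"
    by (intro sum.cong refl) (simp add: eq_neg_iff_add_eq_0 right_diff_distrib)
  also have "\<dots> = \<chi> (-1) * ?q"
    using sum_mult_char[OF \<chi>] False by (simp add: sum_subtractf)
  finally show ?thesis .
qed

lemma gauss_nonzero:
  fixes \<psi> :: "'a::{finite,field} \<Rightarrow> complex"
  assumes "add_char \<psi>" and "\<psi> \<noteq> (\<lambda>_. 1)" and "mult_char \<chi>"
  shows "gauss \<psi> \<chi> \<noteq> 0"
proof -
  have "\<chi> (-1) \<noteq> 0"
    using mult_char_minus_one_squared[OF assms(3)] by auto
  then have "gauss0 \<psi> \<chi> \<noteq> 0"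
    using gauss0_mult_gauss_inverse[OF assms] by auto
  then show ?thesis
    by (simp add: gauss0_def)
qed

lemma gauss0_nonzero:
  fixes \<psi> :: "'a::{finite,field} \<Rightarrow> complex"
  assumes "add_char \<psi>" and "\<psi> \<noteq> (\<lambda>_. 1)" and "mult_char \<chi>"
  shows "gauss0 \<psi> \<chi> \<noteq> 0"
  using gauss_nonzero[OF assms] by (simp add: gauss0_def)

section \<open>The Pochhammer ratio as a Mellin transform\<close>

definition mellin :: "('a::{finite,field} \<Rightarrow> complex) \<Rightarrow> ('a \<Rightarrow> complex) \<Rightarrow> complex" where
  "mellin f \<chi> = (\<Sum>t\<in>UNIV - {0}. f t * \<chi> t)"

lemma mellin_scale: "mellin (\<lambda>t. c * f t) \<chi> = c * mellin f \<chi>"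
  by (simp add: mellin_def sum_distrib_left mult.assoc)

(* At t = 1 the last term is \<beta> 0 = 0, because t / (t - 1) = t / 0 = 0. *)
definition poch_kernel :: "('a::{finite,field} \<Rightarrow> complex) \<Rightarrow> 'a \<Rightarrow> complex" where
  "poch_kernel \<beta> t =
     (if t = 1 then (of_nat CARD('a) - 1) * of_nat (delta_char \<beta>) else 0) - \<beta> (t / (t - 1))"

lemma sum_add_char_mult_char_dilated:
  fixes \<psi> :: "'a::{finite,field} \<Rightarrow> complex"
  assumes "add_char \<psi>" and "\<psi> \<noteq> (\<lambda>_. 1)" and \<beta>: "mult_char \<beta>" and "t \<noteq> 0"
  shows "(\<Sum>x\<in>UNIV - {0}. \<psi> ((1 - inverse t) * x) * \<beta> x) = gauss \<psi> \<beta> * poch_kernel \<beta> t"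
proof (cases "t = 1")
  case True
  have "(\<Sum>x\<in>UNIV - {0}. \<psi> ((1 - inverse t) * x) * \<beta> x) = (\<Sum>x\<in>UNIV - {0}. \<beta> x)"
    using True by (simp add: add_charD(1)[OF assms(1)])
  also have "\<dots> = (of_nat CARD('a) - 1) * of_nat (delta_char \<beta>)"
    using sum_mult_char[OF \<beta>] by (simp add: delta_char_def)
  also have "\<dots> = gauss \<psi> \<beta> * poch_kernel \<beta> t"
    using True by (simp add: poch_kernel_def delta_char_def gauss_triv_char[OF assms(1,2)] mult_charD(1)[OF \<beta>])
  finally show ?thesis .
next
  case False
  define c where "c = 1 - inverse t"
  have "c \<noteq> 0" and inverse_c: "inverse c = t / (t - 1)"
    using False \<open>t \<noteq> 0\<close> by (auto simp: c_def field_simps)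
  have "(\<Sum>x\<in>UNIV - {0}. \<psi> (c * x) * \<beta> x) = (\<Sum>u\<in>UNIV - {0}. \<psi> u * \<beta> (u * inverse c))"
    by (rule sum.reindex_bij_witness[where j = "\<lambda>x. c * x" and i = "\<lambda>u. u / c"])
       (auto simp: \<open>c \<noteq> 0\<close> field_simps)
  also have "\<dots> = \<beta> (inverse c) * (\<Sum>u\<in>UNIV - {0}. \<psi> u * \<beta> u)"
    by (simp add: mult_charD(3)[OF \<beta>] sum_distrib_left mult_ac)
  also have "\<dots> = gauss \<psi> \<beta> * poch_kernel \<beta> t"
    using False by (simp add: gauss_def poch_kernel_def inverse_c)
  finally show ?thesis
    by (simp add: c_def)
qed

lemma gauss_mult_gauss_inverse_eq_mellin:
  fixes \<psi> :: "'a::{finite,field} \<Rightarrow> complex"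
  assumes "add_char \<psi>" and "\<psi> \<noteq> (\<lambda>_. 1)" and "mult_char \<beta>" and \<nu>: "mult_char \<nu>"
  shows "\<nu> (-1) * gauss \<psi> (char_mult \<beta> \<nu>) * gauss \<psi> (\<lambda>x. \<nu> (inverse x))
       = gauss \<psi> \<beta> * mellin (poch_kernel \<beta>) \<nu>"
proof -
  let ?F = "UNIV - {0::'a}"
  have substitution:
    "(\<Sum>y\<in>?F. \<nu> (-1) * (\<psi> x * (\<beta> x * \<nu> x)) * (\<psi> y * \<nu> (inverse y)))
       = (\<Sum>t\<in>?F. \<nu> t * (\<psi> ((1 - inverse t) * x) * \<beta> x))" if "x \<in> ?F" for x
  proof (rule sym, rule sum.reindex_bij_witness[where i = "\<lambda>y. - x / y" and j = "\<lambda>t. - x / t"])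
    fix t
    assume "t \<in> ?F"
    have "inverse (- x / t) = -1 * (t * inverse x)"
      using that \<open>t \<in> ?F\<close> by (simp add: field_simps)
    then have \<nu>_inverse: "\<nu> (inverse (- x / t)) = \<nu> (-1) * (\<nu> t * \<nu> (inverse x))"
      by (simp only: mult_charD(3)[OF \<nu>])
    have "(1 - inverse t) * x = x + - x / t"
      using \<open>t \<in> ?F\<close> by (simp add: field_simps)
    then have \<psi>_sum: "\<psi> x * \<psi> (- x / t) = \<psi> ((1 - inverse t) * x)"
      by (simp only: add_charD(2)[OF assms(1)])
    have "\<nu> (-1) * (\<psi> x * (\<beta> x * \<nu> x)) * (\<psi> (- x / t) * \<nu> (inverse (- x / t)))
        = (\<nu> (-1) * \<nu> (-1)) * (\<nu> (inverse x) * \<nu> x) * \<nu> t * ((\<psi> x * \<psi> (- x / t)) * \<beta> x)"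
      unfolding \<nu>_inverse by (simp add: mult_ac)
    also have "\<dots> = \<nu> t * (\<psi> ((1 - inverse t) * x) * \<beta> x)"
      using mult_char_inverse_mult[OF \<nu>, of x] that
      by (simp only: \<psi>_sum mult_char_minus_one_squared[OF \<nu>] mult_1) simp
    finally show "\<nu> (-1) * (\<psi> x * (\<beta> x * \<nu> x)) * (\<psi> (- x / t) * \<nu> (inverse (- x / t)))
        = \<nu> t * (\<psi> ((1 - inverse t) * x) * \<beta> x)" .
  qed (use that in auto)
  have "\<nu> (-1) * gauss \<psi> (char_mult \<beta> \<nu>) * gauss \<psi> (\<lambda>x. \<nu> (inverse x))
      = \<nu> (-1) * ((\<Sum>x\<in>?F. \<psi> x * (\<beta> x * \<nu> x)) * (\<Sum>y\<in>?F. \<psi> y * \<nu> (inverse y)))"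
    by (simp add: gauss_def char_mult_def)
  also have "\<dots> = (\<Sum>x\<in>?F. \<Sum>y\<in>?F. \<nu> (-1) * (\<psi> x * (\<beta> x * \<nu> x)) * (\<psi> y * \<nu> (inverse y)))"
    by (subst sum_product) (simp add: sum_distrib_left mult.assoc)
  also have "\<dots> = (\<Sum>x\<in>?F. \<Sum>t\<in>?F. \<nu> t * (\<psi> ((1 - inverse t) * x) * \<beta> x))"
    by (intro sum.cong refl substitution)
  also have "\<dots> = (\<Sum>t\<in>?F. \<nu> t * (\<Sum>x\<in>?F. \<psi> ((1 - inverse t) * x) * \<beta> x))"
    by (subst sum.swap) (simp add: sum_distrib_left)
  also have "\<dots> = (\<Sum>t\<in>?F. \<nu> t * (gauss \<psi> \<beta> * poch_kernel \<beta> t))"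
    by (intro sum.cong refl) (simp add: sum_add_char_mult_char_dilated[OF assms(1-3)])
  also have "\<dots> = gauss \<psi> \<beta> * mellin (poch_kernel \<beta>) \<nu>"
    by (simp add: mellin_def sum_distrib_left mult_ac)
  finally show ?thesis .
qed

lemma poch_ratio_eq_mellin:
  fixes \<psi> :: "'a::{finite,field} \<Rightarrow> complex"
  assumes "add_char \<psi>" and "\<psi> \<noteq> (\<lambda>_. 1)" and "mult_char \<beta>" and \<nu>: "mult_char \<nu>"
  shows "poch \<psi> \<beta> \<nu> / poch0 \<psi> triv_char \<nu> = mellin (poch_kernel \<beta>) \<nu>"
proof -
  let ?q = "of_nat CARD('a) :: complex"
  have "char_mult triv_char \<nu> = \<nu>"
    by (auto simp: char_mult_def triv_char_def mult_charD(1)[OF \<nu>])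
  then have "poch \<psi> \<beta> \<nu> / poch0 \<psi> triv_char \<nu>
      = gauss \<psi> (char_mult \<beta> \<nu>) * (?q / gauss0 \<psi> \<nu>) / gauss \<psi> \<beta>"
    by (simp add: poch_def poch0_def gauss0_triv_char[OF assms(1,2)])
  also have "?q / gauss0 \<psi> \<nu> = \<nu> (-1) * gauss \<psi> (\<lambda>x. \<nu> (inverse x))"
  proof -
    have "\<nu> (-1) * gauss \<psi> (\<lambda>x. \<nu> (inverse x)) * gauss0 \<psi> \<nu>
        = \<nu> (-1) * (gauss0 \<psi> \<nu> * gauss \<psi> (\<lambda>x. \<nu> (inverse x)))"
      by (simp only: mult_ac)
    also have "\<dots> = ?q"
      by (simp add: gauss0_mult_gauss_inverse[OF assms(1,2) \<nu>] mult.assoc[symmetric]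
          mult_char_minus_one_squared[OF \<nu>])
    finally show ?thesis
      using gauss0_nonzero[OF assms(1,2) \<nu>] by (simp add: divide_eq_eq)
  qed
  also have "gauss \<psi> (char_mult \<beta> \<nu>) * (\<nu> (-1) * gauss \<psi> (\<lambda>x. \<nu> (inverse x))) / gauss \<psi> \<beta>
      = mellin (poch_kernel \<beta>) \<nu>"
    using gauss_mult_gauss_inverse_eq_mellin[OF assms] gauss_nonzero[OF assms(1-3)]
    by (simp add: divide_eq_eq mult_ac)
  finally show ?thesis .
qed

lemma poch_kernel_prod:
  fixes \<beta> :: "'i \<Rightarrow> 'a::{finite,field} \<Rightarrow> complex"
  assumes "finite I" and "I \<noteq> {}" and \<beta>: "\<forall>i\<in>I. mult_char (\<beta> i)"
    and nontrivial: "(\<lambda>x. \<Prod>i\<in>I. \<beta> i x) \<noteq> triv_char"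
  shows "poch_kernel (\<lambda>x. \<Prod>i\<in>I. \<beta> i x) t = (-1) ^ (card I - 1) * (\<Prod>i\<in>I. poch_kernel (\<beta> i) t)"
proof (cases "t = 1")
  case False
  obtain m where "card I = Suc m"
    using assms(1,2) by (metis card_gt_0_iff gr0_implies_Suc)
  then show ?thesis
    using False by (simp add: poch_kernel_def prod_uminus)
next
  case True
  have "card I > 0"
    using assms(1,2) by (simp add: card_gt_0_iff)
  have "\<exists>i\<in>I. \<beta> i \<noteq> triv_char"
  proof (rule ccontr)
    assume "\<not> (\<exists>i\<in>I. \<beta> i \<noteq> triv_char)"
    then have "(\<lambda>x. \<Prod>i\<in>I. \<beta> i x) = (\<lambda>x. triv_char x ^ card I)"
      by simp
    also have "\<dots> = triv_char"
      using \<open>card I > 0\<close> by (auto simp: triv_char_def fun_eq_iff)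
    finally show False
      using nontrivial by blast
  qed
  then obtain i where "i \<in> I" and "\<beta> i \<noteq> triv_char"
    by blast
  moreover have "mult_char (\<beta> i)"
    using \<beta> \<open>i \<in> I\<close> by blast
  ultimately have "poch_kernel (\<beta> i) t = 0" and "\<beta> i 0 = 0"
    using True by (simp_all add: poch_kernel_def delta_char_def mult_charD(1))
  then have "(\<Prod>i\<in>I. poch_kernel (\<beta> i) t) = 0" and "(\<Prod>i\<in>I. \<beta> i 0) = 0"
    using \<open>i \<in> I\<close> by (auto intro: prod_zero[OF assms(1)])
  then show ?thesis
    using True nontrivial by (simp add: poch_kernel_def delta_char_def)
qed

section \<open>Multiplicative convolution\<close>

lemma mellin_inversion:
  fixes f :: "'a::{finite,field} \<Rightarrow> complex"
  assumes "t \<noteq> 0"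
  shows "(\<Sum>\<chi>\<in>mult_chars. mellin f \<chi> * \<chi> t) = (of_nat CARD('a) - 1) * f (inverse t)"
proof -
  have "(\<Sum>\<chi>\<in>mult_chars. mellin f \<chi> * \<chi> t) = (\<Sum>\<chi>\<in>mult_chars. \<Sum>s\<in>UNIV - {0}. f s * \<chi> (s * t))"
    by (intro sum.cong refl) (auto simp: mellin_def sum_distrib_right mult_charD(3) mult.assoc)
  also have "\<dots> = (\<Sum>s\<in>UNIV - {0}. f s * (\<Sum>\<chi>\<in>mult_chars. \<chi> (s * t)))"
    by (subst sum.swap) (simp add: sum_distrib_left)
  also have "\<dots> = (\<Sum>s\<in>UNIV - {0}. if s = inverse t then (of_nat CARD('a) - 1) * f s else 0)"
  proof (intro sum.cong refl)
    fix s :: 'a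
    assume "s \<in> UNIV - {0}"
    then have "s * t \<noteq> 0" and "s * t = 1 \<longleftrightarrow> s = inverse t"
      using assms by (auto simp: field_simps)
    then show "f s * (\<Sum>\<chi>\<in>mult_chars. \<chi> (s * t)) = (if s = inverse t then (of_nat CARD('a) - 1) * f s else 0)"
      by (simp add: sum_mult_chars)
  qed
  also have "\<dots> = (of_nat CARD('a) - 1) * f (inverse t)"
    using assms by simp
  finally show ?thesis .
qed

lemma mellin_prod_convolution:
  fixes h :: "'i \<Rightarrow> 'a::{finite,field} \<Rightarrow> complex"
  assumes "finite I" and "I \<noteq> {}" and \<nu>: "mult_char \<nu>"
  shows "(\<Sum>\<mu>\<in>{\<mu> \<in> Pi\<^sub>E I (\<lambda>_. mult_chars). (\<lambda>x. \<Prod>i\<in>I. \<mu> i x) = \<nu>}. \<Prod>i\<in>I. mellin (h i) (\<mu> i))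
       = (of_nat CARD('a) - 1) ^ (card I - 1) * mellin (\<lambda>t. \<Prod>i\<in>I. h i t) \<nu>"
proof -
  let ?F = "UNIV - {0::'a}"
  let ?Q = "of_nat CARD('a) - 1 :: complex"
  let ?P = "Pi\<^sub>E I (\<lambda>_. mult_chars :: ('a \<Rightarrow> complex) set)"
  let ?M = "\<lambda>\<mu>. \<Prod>i\<in>I. mellin (h i) (\<mu> i)"
  have "finite ?P"
    using assms(1) finite_mult_chars by (rule finite_PiE)
  have "card I > 0"
    using assms(1,2) by (simp add: card_gt_0_iff)
  have indicator: "(if (\<lambda>x. \<Prod>i\<in>I. \<mu> i x) = \<nu> then 1 else 0)
      = (\<Sum>t\<in>?F. (\<Prod>i\<in>I. \<mu> i t) * \<nu> (inverse t)) / ?Q" if "\<mu> \<in> ?P" for \<mu>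
  proof -
    have "mult_char (\<lambda>x. \<Prod>i\<in>I. \<mu> i x)"
      using that by (intro mult_char_prod assms(1,2)) auto
    then show ?thesis
      using sum_mult_char_times_inverse[OF _ \<nu>] card_minus_one_nonzero[where 'a = 'a] by simp
  qed
  have "(\<Sum>\<mu>\<in>{\<mu> \<in> ?P. (\<lambda>x. \<Prod>i\<in>I. \<mu> i x) = \<nu>}. ?M \<mu>)
      = (\<Sum>\<mu>\<in>?P. (if (\<lambda>x. \<Prod>i\<in>I. \<mu> i x) = \<nu> then 1 else 0) * ?M \<mu>)"
    unfolding sum.inter_filter[OF \<open>finite ?P\<close>] by (intro sum.cong refl) simp
  also have "\<dots> = (\<Sum>\<mu>\<in>?P. \<Sum>t\<in>?F. \<nu> (inverse t) * (\<Prod>i\<in>I. mellin (h i) (\<mu> i) * \<mu> i t)) / ?Q"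
    by (simp add: indicator sum_divide_distrib sum_distrib_left sum_distrib_right prod.distrib mult_ac)
  also have "\<dots> = (\<Sum>t\<in>?F. \<nu> (inverse t) * (\<Prod>i\<in>I. \<Sum>\<chi>\<in>mult_chars. mellin (h i) \<chi> * \<chi> t)) / ?Q"
    by (subst sum.swap) (simp add: prod_sum_PiE[OF assms(1) finite_mult_chars] sum_distrib_left)
  also have "\<dots> = (\<Sum>t\<in>?F. \<nu> (inverse t) * (\<Prod>i\<in>I. ?Q * h i (inverse t))) / ?Q"
    by (intro arg_cong[where f = "\<lambda>s. s / ?Q"] sum.cong refl) (simp add: mellin_inversion)
  also have "\<dots> = ?Q ^ card I * (\<Sum>t\<in>?F. \<nu> (inverse t) * (\<Prod>i\<in>I. h i (inverse t))) / ?Q"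
    by (simp add: prod.distrib sum_distrib_left mult_ac)
  also have "\<dots> = ?Q ^ (card I - 1) * (\<Sum>t\<in>?F. \<nu> (inverse t) * (\<Prod>i\<in>I. h i (inverse t)))"
    using \<open>card I > 0\<close> card_minus_one_nonzero[where 'a = 'a] by (simp add: power_eq_if)
  also have "(\<Sum>t\<in>?F. \<nu> (inverse t) * (\<Prod>i\<in>I. h i (inverse t))) = mellin (\<lambda>t. \<Prod>i\<in>I. h i t) \<nu>"
    unfolding mellin_def
    by (rule sum.reindex_bij_witness[where i = inverse and j = inverse]) (auto simp: mult.commute)
  finally show ?thesis .
qed

lemma poch_ratio_prod_eq_mellin:
  fixes \<psi> :: "'a::{finite,field} \<Rightarrow> complex" and \<beta> :: "'i \<Rightarrow> 'a \<Rightarrow> complex"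
  assumes "add_char \<psi>" and "\<psi> \<noteq> (\<lambda>_. 1)" and "finite I" and "I \<noteq> {}"
    and "\<forall>i\<in>I. mult_char (\<beta> i)" and "(\<lambda>x. \<Prod>i\<in>I. \<beta> i x) \<noteq> triv_char" and "mult_char \<nu>"
  shows "poch \<psi> (\<lambda>x. \<Prod>i\<in>I. \<beta> i x) \<nu> / poch0 \<psi> triv_char \<nu>
       = (-1) ^ (card I - 1) * mellin (\<lambda>t. \<Prod>i\<in>I. poch_kernel (\<beta> i) t) \<nu>"
proof -
  have "poch_kernel (\<lambda>x. \<Prod>i\<in>I. \<beta> i x) = (\<lambda>t. (-1) ^ (card I - 1) * (\<Prod>i\<in>I. poch_kernel (\<beta> i) t))"
    using poch_kernel_prod[OF assms(3-6)] by auto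
  then show ?thesis
    using poch_ratio_eq_mellin[OF assms(1,2) mult_char_prod[OF assms(3-5)] assms(7)]
    by (simp add: mellin_scale)
qed

lemma sum_prod_poch_ratio_eq_mellin:
  fixes \<psi> :: "'a::{finite,field} \<Rightarrow> complex" and \<beta> :: "'i \<Rightarrow> 'a \<Rightarrow> complex"
  assumes "add_char \<psi>" and "\<psi> \<noteq> (\<lambda>_. 1)" and "finite I" and "I \<noteq> {}"
    and \<beta>: "\<forall>i\<in>I. mult_char (\<beta> i)" and "mult_char \<nu>"
  shows "(\<Sum>\<mu>\<in>{\<mu> \<in> Pi\<^sub>E I (\<lambda>_. mult_chars). (\<lambda>x. \<Prod>i\<in>I. \<mu> i x) = \<nu>}.
            \<Prod>i\<in>I. poch \<psi> (\<beta> i) (\<mu> i) / poch0 \<psi> triv_char (\<mu> i))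
       = (of_nat CARD('a) - 1) ^ (card I - 1) * mellin (\<lambda>t. \<Prod>i\<in>I. poch_kernel (\<beta> i) t) \<nu>"
proof -
  have "(\<Sum>\<mu>\<in>{\<mu> \<in> Pi\<^sub>E I (\<lambda>_. mult_chars). (\<lambda>x. \<Prod>i\<in>I. \<mu> i x) = \<nu>}.
            \<Prod>i\<in>I. poch \<psi> (\<beta> i) (\<mu> i) / poch0 \<psi> triv_char (\<mu> i))
      = (\<Sum>\<mu>\<in>{\<mu> \<in> Pi\<^sub>E I (\<lambda>_. mult_chars). (\<lambda>x. \<Prod>i\<in>I. \<mu> i x) = \<nu>}.
            \<Prod>i\<in>I. mellin (poch_kernel (\<beta> i)) (\<mu> i))"
  proof (intro sum.cong prod.cong refl)
    fix \<mu> i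
    assume "\<mu> \<in> {\<mu> \<in> Pi\<^sub>E I (\<lambda>_. mult_chars). (\<lambda>x. \<Prod>i\<in>I. \<mu> i x) = \<nu>}" and "i \<in> I"
    then show "poch \<psi> (\<beta> i) (\<mu> i) / poch0 \<psi> triv_char (\<mu> i) = mellin (poch_kernel (\<beta> i)) (\<mu> i)"
      using \<beta> by (intro poch_ratio_eq_mellin[OF assms(1,2)]) auto
  qed
  also have "\<dots> = (of_nat CARD('a) - 1) ^ (card I - 1) * mellin (\<lambda>t. \<Prod>i\<in>I. poch_kernel (\<beta> i) t) \<nu>"
    by (rule mellin_prod_convolution[OF assms(3,4,6)])
  finally show ?thesis .
qed

theorem lemma3p22:
  fixes \<psi> :: "'a::{finite,field} \<Rightarrow> complex"
    and \<beta> :: "nat \<Rightarrow> 'a \<Rightarrow> complex"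
    and \<nu> :: "'a \<Rightarrow> complex"
    and n :: nat
  assumes "add_char \<psi>" and "\<psi> \<noteq> (\<lambda>_. 1)"
    and "n \<ge> 1"
    and "\<forall>i<n. mult_char (\<beta> i)"
    and "(\<lambda>x. \<Prod>i<n. \<beta> i x) \<noteq> triv_char"
    and "mult_char \<nu>"
  shows "poch \<psi> (\<lambda>x. \<Prod>i<n. \<beta> i x) \<nu> / poch0 \<psi> triv_char \<nu>
       = 1 / (1 - of_nat (card (UNIV :: 'a set))) ^ (n - 1) *
         (\<Sum>\<mu> \<in> {\<mu> \<in> Pi\<^sub>E {..<n} (\<lambda>_. {\<chi>. mult_char \<chi>}). (\<lambda>x. \<Prod>i<n. \<mu> i x) = \<nu>}.
            \<Prod>i<n. poch \<psi> (\<beta> i) (\<mu> i) / poch0 \<psi> triv_char (\<mu> i))"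
proof -
  let ?q = "of_nat CARD('a) :: complex"
  let ?K = "\<lambda>t. \<Prod>i<n. poch_kernel (\<beta> i) t"
  have nonempty: "{..<n} \<noteq> {}"
    using assms(3) by (simp add: lessThan_empty_iff)
  have \<beta>: "\<forall>i\<in>{..<n}. mult_char (\<beta> i)"
    using assms(4) by simp
  have lhs: "poch \<psi> (\<lambda>x. \<Prod>i<n. \<beta> i x) \<nu> / poch0 \<psi> triv_char \<nu> = (-1) ^ (n - 1) * mellin ?K \<nu>"
    using poch_ratio_prod_eq_mellin[OF assms(1,2) finite_lessThan nonempty \<beta> assms(5,6)] by simp
  have rhs: "(\<Sum>\<mu> \<in> {\<mu> \<in> Pi\<^sub>E {..<n} (\<lambda>_. mult_chars). (\<lambda>x. \<Prod>i<n. \<mu> i x) = \<nu>}.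
            \<Prod>i<n. poch \<psi> (\<beta> i) (\<mu> i) / poch0 \<psi> triv_char (\<mu> i)) = (?q - 1) ^ (n - 1) * mellin ?K \<nu>"
    using sum_prod_poch_ratio_eq_mellin[OF assms(1,2) finite_lessThan nonempty \<beta> assms(6)] by simp
  have "(1 - ?q) ^ (n - 1) = (-1) ^ (n - 1) * (?q - 1) ^ (n - 1)"
    by (simp flip: power_minus)
  then have sign: "1 / (1 - ?q) ^ (n - 1) * (?q - 1) ^ (n - 1) = (-1) ^ (n - 1)"
    using card_minus_one_nonzero[where 'a = 'a] by (simp add: divide_simps)
  show ?thesis
    unfolding lhs rhs mult.assoc[symmetric] sign ..
qed

end
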